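(* Let $m,n$ be positive integers with $m>n$ and $m\ge 3$, and let $q$ be an odd prime. Let $(X,y_1,y_2)$ be positive integers with $X>1$, $\gcd(X,q)=1$, $y_1>y_2$, satisfying \[ X^m-X^n=q^{y_1}-q^{y_2}. \] Put $E=e_q(X)$ (then $E$ divides $m-n$), $N=(m-n)/E$, $e=\nu_q(N)$, and assume that $N$ is odd and $y_2>e$. Define polynomials in $\mathbb Z[t]$: \[ A_E(t)=\begin{cases} t-1 & E=1,\\ t^{E-1}+t^{E-2}+\cdots+t+1 & E>1,\end{cases}\qquad B_{n,E}(t)=\begin{cases} t^n & E=1,\\ t^n(t-1) & E>1,\end{cases} \] \[ I_{E,N}(t)=t^{E(N-1)}+t^{E(N-2)}+\cdots+t^E+1. \] If $E>1$, assume at least one of: (I) $A_E(X)\ne q^{y_2-e}$; (II) $\dfrac{(y_2-e)(m-2E+2)+E-1}{m+\delta(E-1)}\ge \dfrac{\log 2}{\log q}$, where $\delta=1$ if $X^m>q^{y_1}$ and $\delta=0$ if $X^m<q^{y_1}$. Let $(P,Q)$ be the (unique) pair of polynomials in $\mathbb Q[t]$ with $\deg Q<\deg A_E$ such that \[ A_E(t)P(t)+B_{n,E}(t)\,I_{E,N}(t)\,Q(t)=1 \] in $\mathbb Q[t]$, and let $l$ be the least positive integer with $lP\in\mathbb Z[t]$ and $lQ\in\mathbb Z[t]$. Then \[ q^{y_2}\,l\,Q(X)+l\,A_E(X)\equiv 0 \pmod{q^{\kappa}}, \] where \[ \kappa=\begin{cases}\min\left\{2(y_2-e),\ \left\lceil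 \frac{m}{E-1}(y_2-e)\right\rceil\right\} & \text{if } E>1 \text{ and (I) holds},\\ 2(y_2-e) & \text{if } E=1, \text{ or } E>1 \text{ and (II) holds}.\end{cases} \]
   Context: For a positive integer $M$ and an integer $A$ coprime to $M$, $e_M(A)$ denotes the least positive integer $e$ such that $A^e\equiv 1$ or $A^e\equiv -1\pmod M$. For a prime $p$ and nonzero integer $A$, $\nu_p(A)$ is the exponent of $p$ in $A$. *)

theory Defs
  imports Complex_Main "HOL-Computational_Algebra.Computational_Algebra" "HOL-Number_Theory.Cong"
begin

definition e_ord :: "int \<Rightarrow> int \<Rightarrow> nat" where
  "e_ord M A = (LEAST e::nat. e > 0 \<and> ([A ^ e = 1] (mod M) \<or> [A ^ e = -1] (mod M)))"

definition polyA :: "nat \<Rightarrow> rat poly" where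
  "polyA E = (if E = 1 then [:-1, 1:] else (\<Sum>i<E. monom 1 i))"

definition polyB :: "nat \<Rightarrow> nat \<Rightarrow> rat poly" where
  "polyB n E = (if E = 1 then monom 1 n else monom 1 n * [:-1, 1:])"

definition polyI :: "nat \<Rightarrow> nat \<Rightarrow> rat poly" where
  "polyI E N = (\<Sum>j<N. monom 1 (E * j))"

definition int_coeffs :: "rat poly \<Rightarrow> bool" where
  "int_coeffs p \<longleftrightarrow> (\<forall>i. coeff p i \<in> \<int>)"

end

theory Submission
  imports Defs "HOL-Computational_Algebra.Field_as_Ring"
begin

(*
  Write A = A_E(X) and C = B_{n,E}(X) I_{E,N}(X). The polynomial identity
  B_{n,E} I_{E,N} A_E = t^m - t^n turns the equation into C A = q^y1 - q^y2, and multiplying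
  the Bezout identity A P(X) + C Q(X) = 1 by l A gives

    q^y2 l Q(X) + l A = A^2 (l P(X)) + q^y1 (l Q(X)),

  whose right-hand side is an integer divisible by q^min(2(y2 - e), y1) once q^(y2 - e) divides A.
  That divisibility comes from q^y2 | X^(m - n) - 1 = (X - 1) A I_{E,N}(X) (without the factor
  X - 1 when E = 1): for E > 1 the factor X - 1 is prime to q, and since X^E = 1 (mod q),
  lifting the exponent gives nu_q(I_{E,N}(X)) <= nu_q(N) = e. Finally kappa <= y1 follows by
  comparing X^m - X^n < q^y1 with lower bounds for A: directly for E = 1, via Bernoulli's
  inequality when A >= 2 q^(y2 - e) (condition (I)), and by taking logarithms under (II).
*)

section \<open>Geometric sums and q-adic valuations\<close>

lemma geometric_sum_mult_split:
  "(\<Sum>j<k * M. (Y::'a::comm_semiring_1) ^ j) = (\<Sum>j<M. Y ^ j) * (\<Sum>i<k. (Y ^ M) ^ i)"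
proof -
  have block: "(\<Sum>j\<in>{i * M..<i * M + M}. Y ^ j) = (Y ^ M) ^ i * (\<Sum>j<M. Y ^ j)" for i
    using sum.shift_bounds_nat_ivl[of "power Y" 0 "i * M" M]
    by (simp add: lessThan_atLeast0 sum_distrib_left power_add power_mult ac_simps)
  have "(\<Sum>j<k * M. Y ^ j) = (\<Sum>i<k. \<Sum>j\<in>{i * M..<i * M + M}. Y ^ j)"
    by (rule sum.nat_group [symmetric])
  then show ?thesis by (simp add: block sum_distrib_left sum_distrib_right mult.commute)
qed

lemma geometric_sum_pos: "N > 0 \<Longrightarrow> (\<Sum>j<N. (Y::nat) ^ j) > 0"
  by (metis lessThan_iff member_le_sum finite_lessThan power_0 less_le_trans zero_less_one zero_le)

lemma power_one_plus_cong_mod_square: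
  "[(1 + q * k) ^ i = 1 + i * (q * k)] (mod (q::nat)^2)"
proof (induction i)
  case (Suc i)
  have "[(1 + q * k) ^ Suc i = (1 + q * k) * (1 + i * (q * k))] (mod q^2)"
    using cong_mult[OF cong_refl Suc.IH] by (simp only: power_Suc)
  also have "(1 + q * k) * (1 + i * (q * k)) = 1 + Suc i * (q * k) + q^2 * (i * k * k)"
    by (simp add: algebra_simps power2_eq_square)
  also have "[\<dots> = 1 + Suc i * (q * k)] (mod q^2)"
    by (simp add: cong_def)
  finally show ?case .
qed simp

lemma geometric_sum_cong_mod_square:
  assumes "odd (q::nat)" and "[Z = 1] (mod q)"
  shows "[(\<Sum>i<q. Z ^ i) = q] (mod q^2)"
proof (cases "q = 1")
  case False
  with assms(2) obtain k where Z: "Z = 1 + q * k"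
    by (metis cong_to_1'_nat mult.commute)
  obtain h where q: "q = 2 * h + 1"
    using assms(1) oddE by blast
  have gauss: "(\<Sum>i<q. i) = q * h"
    using gauss_sum_nat[of "2 * h"] by (simp add: q lessThan_Suc_atMost atMost_atLeast0)
  have "[(\<Sum>i<q. Z ^ i) = (\<Sum>i<q. 1 + i * (q * k))] (mod q^2)"
    unfolding Z by (intro cong_sum power_one_plus_cong_mod_square)
  also have "(\<Sum>i<q. 1 + i * (q * k)) = q + (\<Sum>i<q. i) * (q * k)"
    by (subst sum.distrib) (simp add: sum_distrib_right)
  also have "\<dots> = q + q^2 * (h * k)"
    by (simp add: gauss power2_eq_square)
  also have "[\<dots> = q] (mod q^2)"
    by (simp add: cong_def)
  finally show ?thesis .
qed (simp add: cong_def)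

lemma multiplicity_geometric_sum_le:
  assumes p: "prime (p::nat)" "odd p" and Y: "[Y = 1] (mod p)" and "N > 0"
  shows "multiplicity p (\<Sum>j<N. Y ^ j) \<le> multiplicity p N"
  using \<open>N > 0\<close>
proof (induction N rule: less_induct)
  case (less N)
  show ?case
  proof (cases "p dvd N")
    case False
    have "[(\<Sum>j<N. Y ^ j) = (\<Sum>j<N. 1)] (mod p)"
      by (intro cong_sum) (metis Y cong_pow power_one)
    then have "\<not> p dvd (\<Sum>j<N. Y ^ j)"
      using False cong_dvd_iff by auto
    then show ?thesis
      by (simp add: not_dvd_imp_multiplicity_0)
  next
    case True
    then obtain M where N: "N = p * M" ..
    have p1: "p > 1"
      using p prime_gt_1_nat by blast
    with less.prems N have "M > 0" "M < N"
      by auto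
    define T where "T = (\<Sum>i<p. (Y ^ M) ^ i)"
    have "[Y ^ M = 1] (mod p)"
      by (metis Y cong_pow power_one)
    then have "[T = p] (mod p^2)"
      unfolding T_def using p(2) by (intro geometric_sum_cong_mod_square)
    then have "\<not> p^2 dvd T"
      using p1 by (auto simp: cong_dvd_iff power2_eq_square dest: dvd_imp_le)
    then have "multiplicity p T \<le> 1"
      using multiplicity_dvd'[of 2 p T] by linarith
    have "T > 0"
      unfolding T_def using p1 by (intro geometric_sum_pos) simp
    have split: "(\<Sum>j<N. Y ^ j) = (\<Sum>j<M. Y ^ j) * T"
      unfolding T_def N by (rule geometric_sum_mult_split)
    have "multiplicity p (\<Sum>j<N. Y ^ j) = multiplicity p (\<Sum>j<M. Y ^ j) + multiplicity p T"
      unfolding split using p(1) \<open>T > 0\<close> geometric_sum_pos[OF \<open>M > 0\<close>, of Y]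
      by (metis prime_elem_multiplicity_mult_distrib prime_imp_prime_elem not_gr0)
    also have "\<dots> \<le> multiplicity p M + 1"
      using less.IH \<open>M < N\<close> \<open>M > 0\<close> \<open>multiplicity p T \<le> 1\<close> by fastforce
    also have "\<dots> = multiplicity p N"
      using \<open>M > 0\<close> p1 by (simp add: N multiplicity_times_same)
    finally show ?thesis .
  qed
qed

lemma prime_power_dvd_factor:
  assumes "prime (p::nat)" "x > 0" "y > 0" "p ^ k dvd x * y" "multiplicity p y \<le> e"
  shows "p ^ (k - e) dvd x"
proof -
  have "k \<le> multiplicity p (x * y)"
    using assms by (intro multiplicity_geI) (auto simp: not_prime_unit)
  also have "\<dots> = multiplicity p x + multiplicity p y"
    using assms by (simp add: prime_elem_multiplicity_mult_distrib)
  finally show ?thesis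
    using assms(5) by (intro multiplicity_dvd') simp
qed

lemma power_dvd_square_if_le_double:
  fixes p x :: "'a::comm_semiring_1"
  assumes "p ^ a dvd x" and "k \<le> 2 * a"
  shows "p ^ k dvd x ^ 2"
proof -
  have "p ^ k dvd (p ^ a) ^ 2"
    using assms(2) by (simp add: le_imp_power_dvd mult.commute flip: power_mult)
  also have "\<dots> dvd x ^ 2"
    using assms(1) by (rule dvd_power_same)
  finally show ?thesis .
qed

section \<open>The order-like quantity e_M(A)\<close>

lemma e_ord_pos_and_cong:
  assumes "[A ^ D = 1] (mod M)" and "D > 0"
  shows "e_ord M A > 0"
    and "[A ^ e_ord M A = 1] (mod M) \<or> [A ^ e_ord M A = -1] (mod M)"
  using LeastI[of "\<lambda>e. e > 0 \<and> ([A ^ e = 1] (mod M) \<or> [A ^ e = -1] (mod M))" D] assms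
  by (simp_all add: e_ord_def)

lemma e_ord_minimal:
  assumes "0 < e" and "e < e_ord M A"
  shows "\<not> [A ^ e = 1] (mod M)" and "\<not> [A ^ e = -1] (mod M)"
  using not_less_Least[of e "\<lambda>e. e > 0 \<and> ([A ^ e = 1] (mod M) \<or> [A ^ e = -1] (mod M))"] assms
  by (auto simp: e_ord_def)

lemma e_ord_dvd_of_odd_quotient:
  assumes D: "[A ^ D = 1] (mod M)" "D > 0" and odd: "odd (D div e_ord M A)"
    and M: "\<not> [1 = -1] (mod M)"
  shows "e_ord M A dvd D" and "[A ^ e_ord M A = 1] (mod M)"
proof -
  define E where "E = e_ord M A"
  have "E > 0"
    unfolding E_def using D by (rule e_ord_pos_and_cong)
  define r where "r = D mod E"
  have "r < E"
    using \<open>E > 0\<close> by (simp add: r_def)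
  have split: "A ^ D = (A ^ E) ^ (D div E) * A ^ r"
    by (simp add: r_def flip: power_mult power_add)
  have "[A ^ E = 1] (mod M)"
  proof (rule ccontr)
    assume "\<not> [A ^ E = 1] (mod M)"
    then have "[A ^ E = -1] (mod M)"
      using e_ord_pos_and_cong(2)[OF D] by (simp add: E_def)
    then have "[A ^ D = (-1) ^ (D div E) * A ^ r] (mod M)"
      unfolding split by (intro cong_mult cong_pow cong_refl)
    then have "[- (A ^ r) = 1] (mod M)"
      using odd D(1) by (simp add: E_def) (metis cong_sym cong_trans)
    then have "[A ^ r = -1] (mod M)"
      by (metis cong_minus_minus_iff minus_minus)
    with M e_ord_minimal(2)[of r M A] \<open>r < E\<close> show False
      by (cases "r = 0") (simp_all add: E_def)
  qed
  moreover have "r = 0"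
  proof (rule ccontr)
    assume "r \<noteq> 0"
    have "[A ^ D = 1 ^ (D div E) * A ^ r] (mod M)"
      unfolding split by (intro cong_mult cong_pow cong_refl \<open>[A ^ E = 1] (mod M)\<close>)
    then have "[A ^ r = 1] (mod M)"
      using D(1) by (metis cong_sym cong_trans mult_1 power_one)
    with e_ord_minimal(1)[of r M A] \<open>r < E\<close> \<open>r \<noteq> 0\<close> show False
      by (simp add: E_def)
  qed
  ultimately show "E dvd D" "[A ^ E = 1] (mod M)"
    by (auto simp: r_def)
qed

lemma prime_power_dvd_pow_diff_one:
  fixes x p :: int
  assumes "x ^ m - x ^ n = p ^ y1 - p ^ y2" and "n \<le> m" and "y2 \<le> y1" and "coprime x p"
  shows "p ^ y2 dvd x ^ (m - n) - 1"
proof -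
  have "x ^ n * (x ^ (m - n) - 1) = p ^ y2 * (p ^ (y1 - y2) - 1)"
    using assms(1-3) by (simp add: algebra_simps flip: power_add)
  then have "p ^ y2 dvd x ^ n * (x ^ (m - n) - 1)"
    by (metis dvd_triv_left)
  moreover have "coprime (p ^ y2) (x ^ n)"
    using assms(4) by (simp add: coprime_commute)
  ultimately show ?thesis
    by (simp add: coprime_dvd_mult_right_iff)
qed

section \<open>The polynomials A_E, B_{n,E} and I_{E,N}\<close>

lemma x_minus_one_eq_monom: "[:-1, 1:] = monom 1 1 - (1 :: 'a::comm_ring_1 poly)"
  by (simp add: monom_Suc one_pCons)

lemma monom_geometric_sum:
  "(monom 1 k - 1) * (\<Sum>j<N. monom 1 (k * j)) = monom (1::'a::comm_ring_1) (k * N) - 1"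
  using power_diff_1_eq[of "monom (1::'a) k" N] by (simp add: monom_power mult.commute)

lemma x_minus_one_mult_polyA: "E > 1 \<Longrightarrow> [:-1, 1:] * polyA E = monom 1 E - 1"
  using monom_geometric_sum[of 1 E] by (simp add: polyA_def x_minus_one_eq_monom)

lemma polyA_dvd_monom_minus_one:
  assumes "E \<ge> 1"
  shows "polyA E dvd monom 1 E - 1"
proof (cases "E = 1")
  case False
  with assms have "[:-1, 1:] * polyA E = monom 1 E - 1"
    by (intro x_minus_one_mult_polyA) simp
  then show ?thesis
    by (metis dvd_triv_right)
qed (simp add: polyA_def x_minus_one_eq_monom)

lemma polyB_mult_polyA: "E \<ge> 1 \<Longrightarrow> polyB n E * polyA E = monom 1 n * (monom 1 E - 1)"
  using x_minus_one_mult_polyA[of E]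
  by (cases "E = 1") (simp_all add: polyA_def polyB_def x_minus_one_eq_monom mult.assoc)

lemma polyB_polyI_polyA:
  assumes "E \<ge> 1"
  shows "polyB n E * polyI E N * polyA E = monom 1 (n + E * N) - monom 1 n"
proof -
  have "polyB n E * polyI E N * polyA E = monom 1 n * ((monom 1 E - 1) * polyI E N)"
    using polyB_mult_polyA[OF assms] by (metis mult.assoc mult.commute)
  also have "(monom 1 E - 1) * polyI E N = monom 1 (E * N) - 1"
    unfolding polyI_def by (rule monom_geometric_sum)
  finally show ?thesis
    by (simp add: right_diff_distrib mult_monom)
qed

lemma coprime_if_dvd_diff_unit:
  fixes a b :: "'a::{comm_ring_1, algebraic_semidom}"
  assumes "a dvd x" and "b dvd y" and "is_unit (x - y)"
  shows "coprime a b"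
proof (rule coprimeI)
  fix c assume "c dvd a" and "c dvd b"
  with assms have "c dvd x - y"
    by (meson dvd_diff dvd_trans)
  then show "is_unit c"
    using assms(3) by (rule dvd_unit_imp_unit)
qed

lemma polyA_dvd_monom_mult_minus_one: "E \<ge> 1 \<Longrightarrow> polyA E dvd monom 1 (E * j) - 1"
  using polyA_dvd_monom_minus_one monom_geometric_sum[of E j] dvd_trans dvd_triv_left by metis

lemma coprime_polyA_monom: "E \<ge> 1 \<Longrightarrow> coprime (polyA E) (monom 1 n)"
proof -
  assume "E \<ge> 1"
  then have "monom 1 n dvd (monom 1 n ^ E :: rat poly)"
    by simp
  then show ?thesis
    using polyA_dvd_monom_mult_minus_one[OF \<open>E \<ge> 1\<close>, of n]
    by (intro coprime_if_dvd_diff_unit[of _ "monom 1 (E * n) - 1" _ "monom 1 (E * n)"])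
      (simp_all add: monom_power mult.commute)
qed

lemma coprime_polyA_x_minus_one: "E > 1 \<Longrightarrow> coprime (polyA E) [:-1, 1:]"
proof (rule coprime_if_dvd_diff_unit[of _ "polyA E" _ "polyA E - [:of_nat E:]"])
  assume "E > 1"
  then have "poly (polyA E - [:of_nat E:]) 1 = 0"
    by (simp add: polyA_def poly_sum poly_monom)
  then show "[:-1, 1:] dvd polyA E - [:of_nat E:]"
    using poly_eq_0_iff_dvd[of "polyA E - [:of_nat E:]" 1] by simp
qed (auto intro: is_unit_triv)

lemma coprime_polyA_polyB: "E \<ge> 1 \<Longrightarrow> coprime (polyA E) (polyB n E)"
  using coprime_polyA_monom[of E n] coprime_polyA_x_minus_one[of E]
  by (cases "E = 1") (simp_all add: polyB_def del: mult_pCons_right)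

lemma coprime_polyA_polyI: "E \<ge> 1 \<Longrightarrow> N > 0 \<Longrightarrow> coprime (polyA E) (polyI E N)"
proof (rule coprime_if_dvd_diff_unit[of _ "polyI E N - [:of_nat N:]" _ "polyI E N"])
  assume "E \<ge> 1"
  have "polyI E N - [:of_nat N:] = (\<Sum>j<N. monom 1 (E * j) - 1)"
    by (simp add: polyI_def sum_subtractf of_nat_poly)
  then show "polyA E dvd polyI E N - [:of_nat N:]"
    using polyA_dvd_monom_mult_minus_one[OF \<open>E \<ge> 1\<close>] by (simp add: dvd_sum)
qed (auto intro: is_unit_triv)

lemma coprime_polyA_polyB_polyI:
  "E \<ge> 1 \<Longrightarrow> N > 0 \<Longrightarrow> coprime (polyA E) (polyB n E * polyI E N)"
  by (simp add: coprime_polyA_polyB coprime_polyA_polyI)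

lemma degree_polyA_pos: "E \<ge> 1 \<Longrightarrow> degree (polyA E) > 0"
proof (rule ccontr)
  assume "E \<ge> 1" and "\<not> degree (polyA E) > 0"
  then obtain c where "polyA E = [:c:]"
    by (metis degree_eq_zeroE not_gr0)
  then have "poly (polyA E) 0 = poly (polyA E) 1"
    by simp
  with \<open>E \<ge> 1\<close> show False
    by (cases "E = 1") (simp_all add: polyA_def poly_sum poly_monom power_0_left)
qed

lemma coprime_bezout_degree_less:
  fixes a c :: "'a::field_gcd poly"
  assumes "coprime a c" and "degree a > 0"
  shows "\<exists>p r. degree r < degree a \<and> a * p + c * r = 1"
proof -
  obtain p0 r0 where bezout: "p0 * a + r0 * c = 1"
    using assms(1) bezout_coefficients_fst_snd[of a c] by (metis coprime_iff_gcd_eq_1)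
  have "a \<noteq> 0"
    using assms(2) by auto
  have "a * (p0 + c * (r0 div a)) + c * (r0 mod a) = p0 * a + c * (r0 div a * a + r0 mod a)"
    by (simp only: ring_distribs ac_simps)
  also have "\<dots> = 1"
    using bezout by (simp add: mult.commute)
  finally show ?thesis
    using degree_mod_less[OF \<open>a \<noteq> 0\<close>, of r0] assms(2) by (metis degree_0)
qed

section \<open>Clearing denominators in the Bezout identity\<close>

lemma int_coeffs_smult_of_nat: "int_coeffs p \<Longrightarrow> int_coeffs (smult (of_nat d) p)"
  by (auto simp: int_coeffs_def)

lemma poly_of_int_in_Ints: "int_coeffs p \<Longrightarrow> poly p (of_int x) \<in> \<int>"
  unfolding int_coeffs_def poly_altdef by (intro Ints_sum Ints_mult Ints_power) auto

lemma int_coeffs_common_denominator: "\<exists>d::nat. d > 0 \<and> int_coeffs (smult (of_nat d) p)"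
proof (induction p)
  case 0
  show ?case
    by (auto simp: int_coeffs_def intro: exI[of _ 1])
next
  case (pCons a p)
  then obtain d where "d > 0" and d: "int_coeffs (smult (of_nat d) p)"
    by blast
  obtain u v where "quotient_of a = (u, v)"
    by (cases "quotient_of a")
  then have "v > 0" and a: "a = of_int u / of_int v"
    by (simp_all add: quotient_of_denom_pos quotient_of_div)
  have "int_coeffs (smult (of_nat (nat v * d)) (pCons a p))"
    unfolding int_coeffs_def
  proof
    fix i
    show "coeff (smult (of_nat (nat v * d)) (pCons a p)) i \<in> \<int>"
    proof (cases i)
      case 0
      then show ?thesis
        using \<open>v > 0\<close> by (simp add: a)
    next
      case (Suc j)
      then show ?thesis
        using d \<open>v > 0\<close> by (simp add: int_coeffs_def mult.assoc)
    qed
  qed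
  with \<open>d > 0\<close> \<open>v > 0\<close> show ?case
    by (metis nat_0_less_mult_iff zero_less_nat_eq)
qed

lemma int_coeffs_common_denominator2:
  "\<exists>d::nat. d > 0 \<and> int_coeffs (smult (of_nat d) p) \<and> int_coeffs (smult (of_nat d) q)"
proof -
  obtain d1 d2 :: nat where "d1 > 0" "int_coeffs (smult (of_nat d1) p)"
    and "d2 > 0" "int_coeffs (smult (of_nat d2) q)"
    using int_coeffs_common_denominator by metis
  then have "int_coeffs (smult (of_nat d2) (smult (of_nat d1) p))"
    and "int_coeffs (smult (of_nat d1) (smult (of_nat d2) q))"
    by (simp_all only: int_coeffs_smult_of_nat)
  with \<open>d1 > 0\<close> \<open>d2 > 0\<close> show ?thesis
    by (intro exI[of _ "d1 * d2"]) (simp add: ac_simps)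
qed

lemma bezout_square_identity:
  fixes a c p r u w :: "'a::comm_ring_1"
  assumes "a * p + c * r = 1" and "c * a = u - w"
  shows "w * r + a = a^2 * p + u * r"
proof -
  have "a = a^2 * p + (c * a) * r"
    using arg_cong[OF assms(1), of "(*) a"] by (simp add: algebra_simps power2_eq_square)
  then show ?thesis
    unfolding assms(2) by (simp add: algebra_simps)
qed

lemma bezout_value_cong_zero:
  fixes A C P Q :: "rat poly" and x a u w M :: int and l :: nat
  assumes bezout: "A * P + C * Q = 1"
    and P: "int_coeffs (smult (of_nat l) P)" and Q: "int_coeffs (smult (of_nat l) Q)"
    and A: "poly A (of_int x) = of_int a"
    and CA: "poly C (of_int x) * of_int a = of_int u - of_int w"
    and "M dvd a^2" and "M dvd u"
  shows "\<exists>z. of_int z = of_int w * of_nat l * poly Q (of_int x) + of_nat l * poly A (of_int x)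
    \<and> [z = 0] (mod M)"
proof -
  obtain p where p: "of_nat l * poly P (of_int x) = (of_int p :: rat)"
    using poly_of_int_in_Ints[OF P, of x] by (auto elim: Ints_cases)
  obtain r where r: "of_nat l * poly Q (of_int x) = (of_int r :: rat)"
    using poly_of_int_in_Ints[OF Q, of x] by (auto elim: Ints_cases)
  have "poly A (of_int x) * poly P (of_int x) + poly C (of_int x) * poly Q (of_int x) = 1"
    using arg_cong[OF bezout, of "\<lambda>f. poly f (of_int x)"] by simp
  then have identity: "of_int w * poly Q (of_int x) + of_int a
      = of_int a ^ 2 * poly P (of_int x) + of_int u * poly Q (of_int x)"
    unfolding A by (rule bezout_square_identity[OF _ CA])
  have "of_int w * of_nat l * poly Q (of_int x) + of_nat l * poly A (of_int x)
      = of_nat l * (of_int w * poly Q (of_int x) + of_int a)"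
    using A by (simp add: algebra_simps)
  also have "\<dots> = of_int a ^ 2 * (of_nat l * poly P (of_int x)) + of_int u * (of_nat l * poly Q (of_int x))"
    unfolding identity by (simp add: algebra_simps)
  also have "\<dots> = of_int (a^2 * p + u * r)"
    by (simp add: p r)
  finally have "of_int w * of_nat l * poly Q (of_int x) + of_nat l * poly A (of_int x)
      = of_int (a^2 * p + u * r)" .
  moreover have "[a^2 * p + u * r = 0] (mod M)"
    using assms(6,7) by (simp add: cong_0_iff)
  ultimately show ?thesis
    by metis
qed

section \<open>The q-adic valuation of A_E(X)\<close>

definition A_value :: "nat \<Rightarrow> nat \<Rightarrow> nat" where
  "A_value E X = (if E = 1 then X - 1 else (\<Sum>i<E. X ^ i))"

lemma poly_polyA_of_nat: "X \<ge> 1 \<Longrightarrow> poly (polyA E) (of_nat X) = of_nat (A_value E X)"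
  by (simp add: polyA_def A_value_def poly_sum poly_monom of_nat_diff)

lemma A_value_pos: "X > 1 \<Longrightarrow> E \<ge> 1 \<Longrightarrow> A_value E X > 0"
  by (simp add: A_value_def geometric_sum_pos)

lemma pred_mult_A_value:
  assumes "X \<ge> 1" and "E \<noteq> 1"
  shows "(X - 1) * A_value E X = X ^ E - 1"
proof -
  have "int ((X - 1) * A_value E X) = int (X ^ E - 1)"
    using assms by (simp add: A_value_def of_nat_diff power_diff_1_eq[of "int X"])
  then show ?thesis
    by (simp only: of_nat_eq_iff)
qed

lemma poly_polyB_polyI_mult_A_value:
  assumes "E \<ge> 1" and "X \<ge> 1"
  shows "poly (polyB n E * polyI E N) (of_nat X) * of_nat (A_value E X)
    = (of_nat X ^ (n + E * N) - of_nat X ^ n :: rat)"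
  using arg_cong[OF polyB_polyI_polyA[OF assms(1), of n N], of "\<lambda>p. poly p (of_nat X)"] assms
  by (simp add: poly_polyA_of_nat poly_monom)

lemma prime_power_dvd_A_value:
  fixes q X E N y :: nat
  assumes q: "prime q" "odd q" and "X > 1" and "E \<ge> 1" and "N > 0"
    and XE: "[int X ^ E = 1] (mod int q)"
    and X1: "E > 1 \<Longrightarrow> \<not> [int X = 1] (mod int q)"
    and dvd: "int q ^ y dvd int X ^ (E * N) - 1"
  shows "q ^ (y - multiplicity q N) dvd A_value E X"
proof -
  have XE_nat: "[X ^ E = 1] (mod q)"
    using XE by (metis cong_int_iff of_nat_1 of_nat_power)
  define S where "S = (\<Sum>j<N. (X ^ E) ^ j)"
  define c where "c = (if E = 1 then 1 else int X - 1)"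
  have "int X ^ (E * N) - 1 = (int X ^ E - 1) * int S"
    by (simp add: S_def power_mult power_diff_1_eq[of "int X ^ E"])
  also have "int X ^ E - 1 = c * int (A_value E X)"
    using \<open>X > 1\<close> by (simp add: c_def A_value_def of_nat_diff power_diff_1_eq[of "int X"])
  finally have "int q ^ y dvd c * int (A_value E X * S)"
    using dvd by (simp add: mult.assoc)
  moreover have "coprime (int q ^ y) c"
  proof (cases "E = 1")
    case False
    with \<open>E \<ge> 1\<close> X1 have "\<not> int q dvd int X - 1"
      by (simp add: cong_iff_dvd_diff)
    with q(1) have "coprime (int q) (int X - 1)"
      by (simp add: prime_imp_coprime)
    with False show ?thesis
      by (simp add: c_def)
  qed (simp add: c_def)
  ultimately have "int (q ^ y) dvd int (A_value E X * S)"
    by (metis coprime_dvd_mult_right_iff of_nat_power)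
  then have "q ^ y dvd A_value E X * S"
    by (simp only: int_dvd_int_iff)
  moreover have "multiplicity q S \<le> multiplicity q N"
    unfolding S_def using q XE_nat \<open>N > 0\<close> by (rule multiplicity_geometric_sum_le)
  ultimately show ?thesis
    using q(1) A_value_pos[OF \<open>X > 1\<close> \<open>E \<ge> 1\<close>] geometric_sum_pos[OF \<open>N > 0\<close>]
    by (intro prime_power_dvd_factor) (auto simp: S_def)
qed

lemma prime_power_dvd_A_value_of_equation:
  fixes m n q X y1 y2 :: nat
  assumes q: "prime q" "odd q" and "X > 1" and "coprime X q" and "n < m" and "y2 \<ge> 1"
    and "y2 < y1" and "int X ^ m - int X ^ n = int q ^ y1 - int q ^ y2"
    and odd: "odd ((m - n) div e_ord (int q) (int X))"
  defines "E \<equiv> e_ord (int q) (int X)" and "N \<equiv> (m - n) div e_ord (int q) (int X)"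
  shows "E > 0" and "m - n = E * N" and "q ^ (y2 - multiplicity q N) dvd A_value E X"
proof -
  have "\<not> [1 = -1] (mod int q)"
    using q prime_ge_2_nat[OF q(1)] by (auto simp: cong_iff_dvd_diff dest: zdvd_imp_le)
  have dvd: "int q ^ y2 dvd int X ^ (m - n) - 1"
    using assms(4-8) by (intro prime_power_dvd_pow_diff_one) (auto simp: coprime_commute)
  then have "[int X ^ (m - n) = 1] (mod int q)"
    using \<open>y2 \<ge> 1\<close> dvd_trans[OF dvd_power[of y2 "int q"]] by (simp add: cong_iff_dvd_diff)
  with \<open>n < m\<close> odd \<open>\<not> [1 = -1] (mod int q)\<close>
  have "E dvd m - n" and XE: "[int X ^ E = 1] (mod int q)" and "E > 0"
    by (auto simp: E_def intro: e_ord_dvd_of_odd_quotient e_ord_pos_and_cong(1))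
  then show "E > 0" and mnEN: "m - n = E * N"
    by (simp_all add: N_def E_def)
  have "N > 0"
    using odd by (simp add: N_def E_def odd_pos)
  have "\<not> [int X = 1] (mod int q)" if "E > 1"
    using e_ord_minimal(1)[of 1 "int q" "int X"] that by (simp add: E_def)
  with q \<open>X > 1\<close> \<open>E > 0\<close> \<open>N > 0\<close> XE dvd show "q ^ (y2 - multiplicity q N) dvd A_value E X"
    by (intro prime_power_dvd_A_value) (simp_all add: mnEN)
qed

section \<open>Size estimates\<close>

lemma pow_diff_less_of_eq:
  fixes X q :: nat
  assumes "int X ^ m - int X ^ n = int q ^ y1 - int q ^ y2" and "n \<le> m" and "X \<ge> 1" and "q > 0"
  shows "X ^ m - X ^ n < q ^ y1"
proof -
  have "int (X ^ m - X ^ n) = int q ^ y1 - int q ^ y2"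
    using assms by (simp add: of_nat_diff power_increasing)
  also have "\<dots> < int (q ^ y1)"
    using assms(4) by simp
  finally show ?thesis
    by (simp only: of_nat_less_iff)
qed

lemma pow_le_two_mult_pred_pow:
  fixes Y k :: nat
  assumes "2 * k \<le> Y"
  shows "Y ^ k \<le> 2 * (Y - 1) ^ k"
proof (cases "Y = 0")
  case False
  then have Y: "real Y > 0"
    by simp
  have "1 - real k / real Y \<le> (1 - 1 / real Y) ^ k"
    using Bernoulli_inequality[of "- 1 / real Y" k] Y by (simp add: field_simps)
  moreover have "1 / 2 \<le> 1 - real k / real Y"
    using assms Y by (simp add: field_simps)
  ultimately have "1 / 2 * real Y ^ k \<le> (1 - 1 / real Y) ^ k * real Y ^ k"
    by (intro mult_right_mono) auto
  also have "(1 - 1 / real Y) ^ k * real Y ^ k = (real Y - 1) ^ k"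
    using Y by (simp add: field_simps flip: power_mult_distrib)
  finally have "real (Y ^ k) \<le> real (2 * (Y - 1) ^ k)"
    using False by (simp add: of_nat_diff)
  then show ?thesis
    by (simp only: of_nat_le_iff)
qed (use assms in simp)

lemma double_le_of_prime_power_dvd_pred:
  fixes q X m n a y1 :: nat
  assumes "X \<ge> 2" and "m \<ge> 2" and "n < m" and "q \<ge> 2"
    and "q ^ a dvd X - 1" and "X ^ m - X ^ n < q ^ y1"
  shows "2 * a \<le> y1"
proof -
  have "q ^ a \<le> X - 1"
    using assms by (intro dvd_imp_le) auto
  then have "q ^ (2 * a) \<le> (X - 1) * (X - 1)"
    by (metis mult_le_mono power2_eq_square power_mult mult.commute)
  also have "\<dots> \<le> X ^ (m - 1) * (X - 1)"
  proof -
    have "X ^ 1 \<le> X ^ (m - 1)"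
      using assms(1,2) by (intro power_increasing) auto
    then show ?thesis
      by (intro mult_right_mono) auto
  qed
  also have "\<dots> = X ^ m - X ^ (m - 1)"
    using assms(2) by (cases m) (simp_all add: diff_mult_distrib2 mult.commute)
  also have "\<dots> \<le> X ^ m - X ^ n"
    using assms(1,3) by (intro diff_le_mono2 power_increasing) auto
  also have "\<dots> < q ^ y1"
    by (rule assms(6))
  finally show ?thesis
    using assms(4) by (simp add: power_less_imp_less_exp less_imp_le)
qed

lemma mult_le_of_large_A_value:
  fixes q X m n E a y1 \<alpha> :: nat
  assumes q: "q \<ge> 2" and X: "X \<ge> 2" and E: "E \<ge> 2" and "n + E \<le> m"
    and \<alpha>: "2 * q ^ a \<le> \<alpha>" and A: "(X - 1) * \<alpha> = X ^ E - 1"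
    and y1: "X ^ m - X ^ n < q ^ y1"
  shows "m * a \<le> y1 * (E - 1)"
proof (rule ccontr)
  assume "\<not> ?thesis"
  then have "q ^ (y1 * (E - 1) + 1) \<le> q ^ (m * a)"
    using q by (intro power_increasing) auto
  have XE: "X ^ E = X * X ^ (E - 1)"
    using E by (cases E) auto
  have "X * q ^ a \<le> (2 * (X - 1)) * q ^ a"
    using X by (intro mult_right_mono) auto
  also have "\<dots> = (X - 1) * (2 * q ^ a)"
    by simp
  also have "\<dots> \<le> X ^ E - 1"
    using \<alpha> A by (metis mult_le_mono2)
  also have "\<dots> < X * X ^ (E - 1)"
    using X XE by simp
  finally have "q ^ a \<le> X ^ (E - 1)"
    by simp
  have "q ^ (m * a) \<le> (X ^ (E - 1)) ^ m"
    using \<open>q ^ a \<le> X ^ (E - 1)\<close> by (simp add: power_mult mult.commute power_mono)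
  also have "\<dots> = X ^ ((m - E) * (E - 1)) * X ^ (E * (E - 1))"
    using assms(4) by (simp add: mult.commute flip: power_add power_mult add_mult_distrib)
  also have "\<dots> \<le> X ^ ((m - E) * (E - 1)) * (2 * (X ^ E - 1) ^ (E - 1))"
  proof -
    have "2 * (E - 1) \<le> (2::nat) ^ E"
      using less_exp[of "E - 1"] E by (cases E) auto
    also have "\<dots> \<le> X ^ E"
      using X by (intro power_mono) auto
    finally show ?thesis
      using pow_le_two_mult_pred_pow[of "E - 1" "X ^ E"] by (simp add: power_mult)
  qed
  also have "\<dots> = 2 * (X ^ (m - E) * (X ^ E - 1)) ^ (E - 1)"
    by (simp add: power_mult_distrib power_mult)
  also have "\<dots> < 2 * (q ^ y1) ^ (E - 1)"
  proof -
    have "X ^ n \<le> X ^ (m - E)"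
      using assms(4) X by (intro power_increasing) auto
    then have "X ^ (m - E) * (X ^ E - 1) \<le> X ^ m - X ^ n"
      using assms(4) by (simp add: diff_mult_distrib2 flip: power_add)
    then show ?thesis
      using y1 E by (simp add: power_strict_mono)
  qed
  finally have "q ^ (m * a) < 2 * (q ^ y1) ^ (E - 1)" .
  moreover have "q ^ (y1 * (E - 1) + 1) = q * (q ^ y1) ^ (E - 1)"
    by (simp add: power_mult)
  ultimately have "q * (q ^ y1) ^ (E - 1) < 2 * (q ^ y1) ^ (E - 1)"
    using \<open>q ^ (y1 * (E - 1) + 1) \<le> q ^ (m * a)\<close> by linarith
  with q show False
    by simp
qed

lemma power_bound_of_condII:
  fixes q m E a d :: nat
  assumes q: "q \<ge> 2" and E: "E \<ge> 1" and "m \<ge> 1" and a: "a \<ge> 1"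
    and cond: "(real a * (real m - 2 * real E + 2) + real E - 1) / (real m + real d * (real E - 1))
      \<ge> ln 2 / ln (real q)"
  shows "(2 * a - 1) * (E - 1) < a * m"
    and "2 ^ (m + d * (E - 1)) \<le> q ^ (a * m - (2 * a - 1) * (E - 1))"
proof -
  define D where "D = m + d * (E - 1)"
  define K where "K = real a * (real m - 2 * real E + 2) + real E - 1"
  have "real D > 0"
    using \<open>m \<ge> 1\<close> by (simp add: D_def add_pos_nonneg del: of_nat_add of_nat_mult)
  have "ln (real q) > 0"
    using q by simp
  have "ln 2 / ln (real q) \<le> K / real D"
    using cond E by (simp add: K_def D_def of_nat_diff)
  then have KD: "real D * ln 2 \<le> K * ln (real q)"
    using \<open>real D > 0\<close> \<open>ln (real q) > 0\<close> by (simp add: field_simps)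
  moreover have "real D * ln 2 > 0"
    using \<open>real D > 0\<close> by simp
  ultimately have "K * ln (real q) > 0"
    by linarith
  then have "K > 0"
    using \<open>ln (real q) > 0\<close> by (simp add: zero_less_mult_iff)
  moreover have K: "K = real (a * m) - real ((2 * a - 1) * (E - 1))"
  proof -
    obtain a' k where "a = Suc a'" and "E = Suc k"
      using a E by (metis One_nat_def Suc_le_D)
    then show ?thesis
      by (simp add: K_def algebra_simps)
  qed
  ultimately have "real ((2 * a - 1) * (E - 1)) < real (a * m)"
    by linarith
  then show lt: "(2 * a - 1) * (E - 1) < a * m"
    by (simp only: of_nat_less_iff)
  have "ln (2 ^ D) \<le> ln (real q ^ (a * m - (2 * a - 1) * (E - 1)))"
    using KD K lt q by (simp add: ln_realpow of_nat_diff mult.commute)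
  then have "(2::real) ^ D \<le> real q ^ (a * m - (2 * a - 1) * (E - 1))"
    using q by (subst (asm) ln_le_cancel_iff) auto
  then show "2 ^ (m + d * (E - 1)) \<le> q ^ (a * m - (2 * a - 1) * (E - 1))"
    unfolding D_def by (metis of_nat_le_iff of_nat_numeral of_nat_power)
qed

lemma double_le_of_condII:
  fixes q X m n E a y1 \<alpha> :: nat
  assumes q: "q \<ge> 2" and X: "X \<ge> 2" and E: "E \<ge> 2" and "n < m" and a: "a \<ge> 1"
    and \<alpha>: "q ^ a \<le> \<alpha>" and A: "(X - 1) * \<alpha> = X ^ E - 1"
    and y1: "X ^ m - X ^ n < q ^ y1"
    and cond: "(real a * (real m - 2 * real E + 2) + real E - 1)
      / (real m + (if X ^ m > q ^ y1 then 1 else 0) * (real E - 1)) \<ge> ln 2 / ln (real q)"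
  shows "2 * a \<le> y1"
proof (rule ccontr)
  assume "\<not> ?thesis"
  then have y1a: "y1 \<le> 2 * a - 1"
    by simp
  define d :: nat where "d = (if X ^ m > q ^ y1 then 1 else 0)"
  have "real d = (if X ^ m > q ^ y1 then 1 else 0)"
    by (simp add: d_def)
  with cond have "(real a * (real m - 2 * real E + 2) + real E - 1) / (real m + real d * (real E - 1))
      \<ge> ln 2 / ln (real q)"
    by simp
  moreover have "E \<ge> 1" and "m \<ge> 1"
    using E \<open>n < m\<close> by simp_all
  ultimately have lt: "(2 * a - 1) * (E - 1) < a * m"
    and bound: "2 ^ (m + d * (E - 1)) \<le> q ^ (a * m - (2 * a - 1) * (E - 1))"
    using power_bound_of_condII[OF q _ _ a] by blast+
  have XE: "X ^ E = X * X ^ (E - 1)"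
    using E by (cases E) auto
  have "X * q ^ a \<le> X * \<alpha>"
    using \<alpha> by simp
  also have "\<dots> \<le> (2 * (X - 1)) * \<alpha>"
    using X by (intro mult_right_mono) auto
  also have "\<dots> < X * (2 * X ^ (E - 1))"
    using A X XE by simp
  finally have "q ^ a < 2 * X ^ (E - 1)"
    by simp
  then have "q ^ (a * m) < (2 * X ^ (E - 1)) ^ m"
    using \<open>n < m\<close> unfolding power_mult by (intro power_strict_mono) auto
  also have "\<dots> = 2 ^ m * (X ^ m) ^ (E - 1)"
    by (simp add: power_mult_distrib mult.commute flip: power_mult)
  also have "\<dots> \<le> 2 ^ m * (2 ^ d * q ^ y1) ^ (E - 1)"
  proof -
    have "X ^ m \<le> 2 ^ d * q ^ y1"
    proof (cases "X ^ m > q ^ y1")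
      case True
      have "X ^ n * 2 \<le> X ^ (n + 1)"
        using X by simp
      also have "\<dots> \<le> X ^ m"
        using \<open>n < m\<close> X by (intro power_increasing) auto
      finally have "X ^ m \<le> 2 * (X ^ m - X ^ n)"
        by simp
      with True y1 show ?thesis
        by (simp add: d_def)
    qed (simp add: d_def)
    then show ?thesis
      by (simp add: power_mono)
  qed
  also have "\<dots> = 2 ^ (m + d * (E - 1)) * q ^ (y1 * (E - 1))"
    by (simp add: power_mult_distrib power_add power_mult)
  also have "\<dots> \<le> 2 ^ (m + d * (E - 1)) * q ^ ((2 * a - 1) * (E - 1))"
    using y1a q by (intro mult_left_mono power_increasing) auto
  also have "\<dots> \<le> q ^ (a * m - (2 * a - 1) * (E - 1)) * q ^ ((2 * a - 1) * (E - 1))"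
    using bound by simp
  also have "\<dots> = q ^ (a * m)"
    using lt by (simp flip: power_add)
  finally show False
    by simp
qed

lemma kappa_le_exponents:
  fixes q X m n E a y1 \<kappa> :: nat
  assumes q: "q \<ge> 2" and X: "X \<ge> 2" and "m \<ge> 2" and "n + E \<le> m" and E: "E \<ge> 1"
    and a: "a \<ge> 1" and dvd: "q ^ a dvd A_value E X" and y1: "X ^ m - X ^ n < q ^ y1"
    and \<kappa>: "((E = 1 \<or> E > 1 \<and> (real a * (real m - 2 * real E + 2) + real E - 1)
          / (real m + (if X ^ m > q ^ y1 then 1 else 0) * (real E - 1)) \<ge> ln 2 / ln (real q))
        \<and> \<kappa> = 2 * a)
      \<or> (E > 1 \<and> poly (polyA E) (of_nat X) \<noteq> of_nat (q ^ a)
        \<and> \<kappa> = min (2 * a) (nat \<lceil>real m / real (E - 1) * real a\<rceil>))"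
  shows "\<kappa> \<le> 2 * a" and "\<kappa> \<le> y1"
proof -
  show "\<kappa> \<le> 2 * a"
    using \<kappa> by auto
  have "n < m"
    using \<open>n + E \<le> m\<close> E by simp
  have "A_value E X > 0"
    using X E by (intro A_value_pos) auto
  have A: "(X - 1) * A_value E X = X ^ E - 1" if "E > 1"
    using X that by (intro pred_mult_A_value) auto
  consider "E = 1" "\<kappa> = 2 * a"
    | "E > 1" "(real a * (real m - 2 * real E + 2) + real E - 1)
          / (real m + (if X ^ m > q ^ y1 then 1 else 0) * (real E - 1)) \<ge> ln 2 / ln (real q)"
        "\<kappa> = 2 * a"
    | "E > 1" "poly (polyA E) (of_nat X) \<noteq> of_nat (q ^ a)" "\<kappa> = min (2 * a) (nat \<lceil>real m / real (E - 1) * real a\<rceil>)"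
    using \<kappa> by blast
  then show "\<kappa> \<le> y1"
  proof cases
    case 1
    then show ?thesis
      using dvd double_le_of_prime_power_dvd_pred[OF X \<open>m \<ge> 2\<close> \<open>n < m\<close> q _ y1]
      by (simp add: A_value_def)
  next
    case 2
    have "q ^ a \<le> A_value E X"
      using dvd \<open>A_value E X > 0\<close> by (rule dvd_imp_le)
    with 2 show ?thesis
      using double_le_of_condII[OF q X _ \<open>n < m\<close> a _ A y1] by simp
  next
    case 3
    obtain k where k: "A_value E X = q ^ a * k"
      using dvd ..
    with 3 X \<open>A_value E X > 0\<close> have "k \<ge> 2"
      by (cases k) (auto simp: poly_polyA_of_nat)
    with k have "2 * q ^ a \<le> A_value E X"
      by simp
    with 3 have "m * a \<le> y1 * (E - 1)"
      using mult_le_of_large_A_value[OF q X _ \<open>n + E \<le> m\<close> _ A y1] by simp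
    then have "real m * real a \<le> real y1 * real (E - 1)"
      by (metis of_nat_le_iff of_nat_mult)
    with 3 have "real m / real (E - 1) * real a \<le> real y1"
      by (simp add: field_simps)
    then have "\<lceil>real m / real (E - 1) * real a\<rceil> \<le> int y1"
      by (simp add: ceiling_le_iff)
    with 3 show ?thesis
      by linarith
  qed
qed

theorem mainTheorem4:
  fixes m n q X y1 y2 :: nat
  assumes hn: "n \<ge> 1" and hmn: "m > n" and hm3: "m \<ge> 3"
    and hq: "prime q" and hqodd: "odd q"
    and hX: "X > 1" and hcop: "coprime X q"
    and hy2: "y2 \<ge> 1" and hy: "y1 > y2"
    and heq: "int X ^ m - int X ^ n = int q ^ y1 - int q ^ y2"
    and hNodd: "odd ((m - n) div e_ord (int q) (int X))"
    and he: "y2 > multiplicity q ((m - n) div e_ord (int q) (int X))"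
    and hcond: "e_ord (int q) (int X) > 1 \<longrightarrow>
      (let E = e_ord (int q) (int X); e = multiplicity q ((m - n) div E);
           \<delta> = (if X ^ m > q ^ y1 then 1 else 0 :: real) in
        poly (polyA E) (of_nat X) \<noteq> of_nat (q ^ (y2 - e))
        \<or> (real (y2 - e) * (real m - 2 * real E + 2) + real E - 1) / (real m + \<delta> * (real E - 1))
            \<ge> ln 2 / ln (real q))"
  shows "let E = e_ord (int q) (int X); N = (m - n) div E; e = multiplicity q N;
             \<delta> = (if X ^ m > q ^ y1 then 1 else 0 :: real);
             condI = (poly (polyA E) (of_nat X) \<noteq> of_nat (q ^ (y2 - e)));
             condII = ((real (y2 - e) * (real m - 2 * real E + 2) + real E - 1)
                        / (real m + \<delta> * (real E - 1)) \<ge> ln 2 / ln (real q))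
         in (\<exists>P Q. degree Q < degree (polyA E) \<and>
                   polyA E * P + polyB n E * polyI E N * Q = 1)
          \<and> (\<forall>P Q. degree Q < degree (polyA E) \<and>
                   polyA E * P + polyB n E * polyI E N * Q = 1 \<longrightarrow>
               (let l = (LEAST l::nat. l > 0 \<and> int_coeffs (smult (of_nat l) P)
                                              \<and> int_coeffs (smult (of_nat l) Q));
                    val = of_nat (q ^ y2) * of_nat l * poly Q (of_nat X)
                          + of_nat l * poly (polyA E) (of_nat X)
                in (\<forall>\<kappa>. ((E = 1 \<or> (E > 1 \<and> condII)) \<and> \<kappa> = 2 * (y2 - e))
                       \<or> (E > 1 \<and> condI \<and>
                           \<kappa> = min (2 * (y2 - e)) (nat \<lceil>real m / real (E - 1) * real (y2 - e)\<rceil>))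
                     \<longrightarrow> (\<exists>z::int. of_int z = val \<and> [z = 0] (mod (int q ^ \<kappa>))))))"
proof -
  define E where "E = e_ord (int q) (int X)"
  define N where "N = (m - n) div E"
  define e where "e = multiplicity q N"
  have "E > 0" and mnEN: "m - n = E * N" and A: "q ^ (y2 - e) dvd A_value E X"
    using prime_power_dvd_A_value_of_equation[OF hq hqodd hX hcop hmn hy2 hy heq hNodd]
    by (simp_all add: E_def N_def e_def)
  have "N > 0" and "y2 - e \<ge> 1"
    using hNodd he by (simp_all add: N_def E_def e_def odd_pos)
  have y1: "X ^ m - X ^ n < q ^ y1"
    using heq hmn hX prime_gt_0_nat[OF hq] by (intro pow_diff_less_of_eq) auto
  have CA: "poly (polyB n E * polyI E N) (of_int (int X)) * of_int (int (A_value E X))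
      = (of_int (int q ^ y1) - of_int (int q ^ y2) :: rat)"
    using poly_polyB_polyI_mult_A_value[of E X n N] arg_cong[OF heq, of "of_int :: int \<Rightarrow> rat"]
      \<open>E > 0\<close> hX hmn by (simp add: mnEN[symmetric])
  have "E \<le> m - n"
    using mnEN \<open>N > 0\<close> by simp
  then have "n + E \<le> m"
    using hmn by linarith
  show ?thesis
    unfolding Let_def E_def[symmetric] N_def[symmetric] e_def[symmetric]
  proof (intro conjI allI impI, goal_cases)
    case 1
    show ?case
      using \<open>E > 0\<close> \<open>N > 0\<close>
      by (intro coprime_bezout_degree_less coprime_polyA_polyB_polyI degree_polyA_pos) simp_all
  next
    case (2 P Q \<kappa>)
    define l where "l = (LEAST l::nat. l > 0 \<and> int_coeffs (smult (of_nat l) P) \<and> int_coeffs (smult (of_nat l) Q))"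
    have l: "l > 0 \<and> int_coeffs (smult (of_nat l) P) \<and> int_coeffs (smult (of_nat l) Q)"
      unfolding l_def by (rule LeastI_ex[OF int_coeffs_common_denominator2])
    have "\<kappa> \<le> 2 * (y2 - e)" and "\<kappa> \<le> y1"
      using kappa_le_exponents[OF _ _ _ \<open>n + E \<le> m\<close> _ \<open>y2 - e \<ge> 1\<close> A y1 2(2)]
        prime_ge_2_nat[OF hq] hX hm3 \<open>E > 0\<close> by simp_all
    have "int q ^ \<kappa> dvd int (A_value E X) ^ 2"
      using power_dvd_square_if_le_double[OF A \<open>\<kappa> \<le> 2 * (y2 - e)\<close>] by (metis int_dvd_int_iff of_nat_power)
    moreover have "int q ^ \<kappa> dvd int q ^ y1"
      using \<open>\<kappa> \<le> y1\<close> by (rule le_imp_power_dvd)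
    ultimately show ?case
      using 2(1) l CA hX bezout_value_cong_zero[of "polyA E" P "polyB n E * polyI E N" Q l "int X"
          "int (A_value E X)" "int q ^ y1" "int q ^ y2" "int q ^ \<kappa>"]
      by (simp add: poly_polyA_of_nat flip: l_def)
  qed
qed

end
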